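(* Let $\mathfrak g$ be a finite-dimensional real Lie algebra whose commutator ideal $[\mathfrak g,\mathfrak g]$ is one-dimensional. Then every complex structure on $\mathfrak g$ is abelian.
   Context: A complex structure on a real Lie algebra $\mathfrak g$ is a linear map $J$ with $J^2=-\mathrm{Id}$ and $J[x,y]-[Jx,y]-[x,Jy]-J[Jx,Jy]=0$ for all $x,y$; it is abelian if $[Jx,Jy]=[x,y]$ for all $x,y$. *)

theory Defs
  imports "HOL-Analysis.Analysis"
begin

definition lie_algebra :: "('a::real_vector \<Rightarrow> 'a \<Rightarrow> 'a) \<Rightarrow> bool" where
  "lie_algebra br \<longleftrightarrow> bilinear br \<and> (\<forall>x. br x x = 0) \<and>
     (\<forall>x y z. br x (br y z) + br y (br z x) + br z (br x y) = 0)"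

definition commutator_ideal :: "('a::real_vector \<Rightarrow> 'a \<Rightarrow> 'a) \<Rightarrow> 'a set" where
  "commutator_ideal br = span {br x y | x y. True}"

definition complex_structure :: "('a::real_vector \<Rightarrow> 'a \<Rightarrow> 'a) \<Rightarrow> ('a \<Rightarrow> 'a) \<Rightarrow> bool" where
  "complex_structure br J \<longleftrightarrow> linear J \<and> (\<forall>x. J (J x) = - x) \<and>
     (\<forall>x y. J (br x y) - br (J x) y - br x (J y) - J (br (J x) (J y)) = 0)"

definition abelian_complex_structure :: "('a::real_vector \<Rightarrow> 'a \<Rightarrow> 'a) \<Rightarrow> ('a \<Rightarrow> 'a) \<Rightarrow> bool" where
  "abelian_complex_structure br J \<longleftrightarrow> complex_structure br J \<and> (\<forall>x y. br (J x) (J y) = br x y)"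

end

theory Submission
  imports Defs
begin

text \<open>For \<open>x, y\<close> put \<open>w = [x,y] - [Jx,Jy]\<close>. The integrability condition says
  \<open>Jw = [Jx,y] + [x,Jy]\<close>, so \<open>w\<close> and \<open>Jw\<close> both lie in the line \<open>[\<g>,\<g>]\<close>. If \<open>w \<noteq> 0\<close>,
  then \<open>w\<close> would be a real eigenvector of \<open>J\<close>, impossible since \<open>J\<^sup>2 = -1\<close>.\<close>

lemma eigenvector_eq_0_if_square_eq_neg_id:
  fixes J :: "'a::real_vector \<Rightarrow> 'a"
  assumes "linear J" and "\<And>x. J (J x) = - x" and "J w = c *\<^sub>R w"
  shows "w = 0"
proof -
  have "- w = J (J w)" using assms(2) by simp
  also have "\<dots> = c *\<^sub>R J w" using assms(1,3) by (simp add: linear_scale)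
  also have "\<dots> = (c * c) *\<^sub>R w" using assms(3) by simp
  finally have "(c * c + 1) *\<^sub>R w = 0"
    by (simp add: algebra_simps) (metis add.commute neg_eq_iff_add_eq_0)
  moreover have "c * c + 1 \<noteq> 0"
    by (metis add_nonneg_pos zero_le_square zero_less_one less_irrefl)
  ultimately show "w = 0" by simp
qed

lemma multiple_if_in_subspace_of_dim_one:
  fixes v w :: "'a::euclidean_space"
  assumes "subspace S" and "dim S = 1" and "w \<in> S" and "w \<noteq> 0" and "v \<in> S"
  shows "\<exists>c. v = c *\<^sub>R w"
proof -
  have "span {w} = span S"
    by (rule dim_eq_span) (use assms in auto)
  with \<open>v \<in> S\<close> have "v \<in> span {w}" by (metis span_base)
  then show ?thesis by (auto simp: span_singleton)
qed

lemma bracket_in_commutator_ideal: "br x y \<in> commutator_ideal br"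
  unfolding commutator_ideal_def by (rule span_base) blast

lemma complex_structure_integrability:
  assumes "complex_structure br J"
  shows "J (br x y - br (J x) (J y)) = br (J x) y + br x (J y)"
proof -
  have "linear J" and "J (br x y) - br (J x) y - br x (J y) - J (br (J x) (J y)) = 0"
    using assms unfolding complex_structure_def by auto
  then show ?thesis by (simp add: linear_diff algebra_simps)
qed

theorem mainTheorem8:
  fixes br :: "'a::euclidean_space \<Rightarrow> 'a \<Rightarrow> 'a"
  assumes "lie_algebra br"
    and "dim (commutator_ideal br) = 1"
  shows "\<forall>J. complex_structure br J \<longrightarrow> abelian_complex_structure br J"
proof (intro allI impI)
  fix J assume cs: "complex_structure br J"
  have "br (J x) (J y) = br x y" for x y
  proof (rule ccontr)
    define w where "w = br x y - br (J x) (J y)"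
    assume "br (J x) (J y) \<noteq> br x y"
    then have "w \<noteq> 0" by (simp add: w_def)
    have C: "subspace (commutator_ideal br)"
      by (simp add: commutator_ideal_def subspace_span)
    have "w \<in> commutator_ideal br" and "J w \<in> commutator_ideal br"
      unfolding w_def complex_structure_integrability[OF cs] commutator_ideal_def
      by (intro span_diff span_add bracket_in_commutator_ideal[unfolded commutator_ideal_def])+
    then obtain c where "J w = c *\<^sub>R w"
      using multiple_if_in_subspace_of_dim_one[OF C assms(2)] \<open>w \<noteq> 0\<close> by metis
    moreover have "linear J" and "\<And>x. J (J x) = - x"
      using cs by (auto simp: complex_structure_def)
    ultimately show False
      using eigenvector_eq_0_if_square_eq_neg_id \<open>w \<noteq> 0\<close> by blast
  qed
  with cs show "abelian_complex_structure br J"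
    by (simp add: abelian_complex_structure_def)
qed

end
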